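(* Let $f:\mathbb{R}^n_{>0}\to\mathbb{R}^n_{>0}$ be order-preserving and homogeneous. If $r(f^J_0)>\lambda(f^{[n]\setminus J}_\infty)$ for some nonempty proper subset $J\subset[n]$, then $f$ has no eigenvectors in $\mathbb{R}^n_{>0}$.
   Context: $[n]=\{1,\dots,n\}$; entrywise order. Order-preserving: $x\le y\Rightarrow f(x)\le f(y)$; homogeneous: $f(tx)=tf(x)$ for $t>0$. Such $f$ extends continuously to order-preserving homogeneous maps $\mathbb{R}^n_{\ge0}\to\mathbb{R}^n_{\ge0}$ and $(0,\infty]^n\to(0,\infty]^n$, again denoted $f$. For $\alpha\in[-\infty,\infty]$, $J\subseteq[n]$: $P^J_\alpha(x)_j=x_j$ for $j\in J$, $=\alpha$ otherwise; $f^J_0=P^J_0fP^J_0$, $f^J_\infty=P^J_\infty fP^J_\infty$. For $g$ order-preserving homogeneous on $\mathbb{R}^n_{\ge0}$ or $(0,\infty]^n$: $r(g)=\inf_{x\in\mathbb{R}^n_{>0}}\max_i g(x)_i/x_i$, $\lambda(g)=\sup_{x\in\mathbb{R}^n_{>0}}\min_i g(x)_i/x_i$ (values in $[0,\infty]$). *)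

theory Defs
  imports "HOL-Analysis.Analysis" "HOL-Library.Extended_Real"
begin

text \<open>Vectors in R^n are modelled as real^'n for a finite index type 'n (so [n] = UNIV).
  The map f is a total function, but all hypotheses concern only its values on
  the open positive cone.\<close>

definition pos_vec :: "real^'n \<Rightarrow> bool" where
  "pos_vec x \<longleftrightarrow> (\<forall>i. 0 < x $ i)"

definition maps_pos :: "(real^'n \<Rightarrow> real^'n) \<Rightarrow> bool" where
  "maps_pos f \<longleftrightarrow> (\<forall>x. pos_vec x \<longrightarrow> pos_vec (f x))"

definition order_preserving_pos :: "(real^'n \<Rightarrow> real^'n) \<Rightarrow> bool" where
  "order_preserving_pos f \<longleftrightarrow>
     (\<forall>x y. pos_vec x \<and> pos_vec y \<and> (\<forall>i. x $ i \<le> y $ i) \<longrightarrow> (\<forall>i. f x $ i \<le> f y $ i))"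

definition homogeneous_pos :: "(real^'n \<Rightarrow> real^'n) \<Rightarrow> bool" where
  "homogeneous_pos f \<longleftrightarrow> (\<forall>x t. pos_vec x \<and> 0 < t \<longrightarrow> f (t *\<^sub>R x) = t *\<^sub>R f x)"

text \<open>Continuous extension to the closed cone R^n_{>=0}: f(x) = lim_{e->0+} f(x + e 1),
  which by monotonicity is the infimum over e > 0.\<close>
definition ext0 :: "(real^'n \<Rightarrow> real^'n) \<Rightarrow> real^'n \<Rightarrow> real^'n" where
  "ext0 f x = (\<chi> i. INF e\<in>{e::real. 0 < e}. f (\<chi> j. x $ j + e) $ i)"

text \<open>Continuous extension to (0,\<infinity>]^n: f(x) = lim_{t->\<infinity>} f(min(x, t 1)),
  which by monotonicity is the supremum over t > 0.\<close>
definition extinf :: "(real^'n \<Rightarrow> real^'n) \<Rightarrow> ereal^'n \<Rightarrow> ereal^'n" where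
  "extinf f x = (\<chi> i. SUP t\<in>{t::real. 0 < t}.
       ereal (f (\<chi> j. real_of_ereal (min (x $ j) (ereal t))) $ i))"

definition proj0 :: "'n set \<Rightarrow> real^'n \<Rightarrow> real^'n" where
  "proj0 J x = (\<chi> i. if i \<in> J then x $ i else 0)"

definition projinf :: "'n set \<Rightarrow> ereal^'n \<Rightarrow> ereal^'n" where
  "projinf J x = (\<chi> i. if i \<in> J then x $ i else \<infinity>)"

definition f0J :: "(real^'n \<Rightarrow> real^'n) \<Rightarrow> 'n set \<Rightarrow> real^'n \<Rightarrow> real^'n" where
  "f0J f J x = proj0 J (ext0 f (proj0 J x))"

definition finfJ :: "(real^'n \<Rightarrow> real^'n) \<Rightarrow> 'n set \<Rightarrow> ereal^'n \<Rightarrow> ereal^'n" where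
  "finfJ f J x = projinf J (extinf f (projinf J x))"

definition cw_r0 :: "(real^'n \<Rightarrow> real^'n) \<Rightarrow> ereal" where
  "cw_r0 g = (INF x\<in>{x. pos_vec x}. Max (range (\<lambda>i. ereal (g x $ i / x $ i))))"

definition cw_lambda_inf :: "(ereal^'n \<Rightarrow> ereal^'n) \<Rightarrow> ereal" where
  "cw_lambda_inf g = (SUP x\<in>{x. pos_vec x}.
       Min (range (\<lambda>i. g (\<chi> j. ereal (x $ j)) $ i / ereal (x $ i))))"

end

theory Submission
  imports Defs
begin

text \<open>An eigenvector \<open>v\<close> of \<open>f\<close> with eigenvalue \<open>\<mu>\<close> is a sub-eigenvector of \<open>f\<^sup>J\<^sub>0\<close>,
  because the extension of \<open>f\<close> to the closed cone is dominated by \<open>f v\<close> below \<open>v\<close>, and a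
  super-eigenvector of \<open>f\<^sup>K\<^sub>\<infinity>\<close> for every \<open>K\<close>, because the extension to \<open>(0,\<infinity>]\<^sup>n\<close>
  dominates \<open>f v\<close> above \<open>v\<close>. Hence \<open>r(f\<^sup>J\<^sub>0) \<le> \<mu> \<le> \<lambda>(f\<^sup>K\<^sub>\<infinity>)\<close> with \<open>K = [n] - J\<close>.\<close>

lemma cw_r0_le_of_subeigenvector:
  assumes "pos_vec v" and "\<And>i. g v $ i \<le> \<mu> * v $ i"
  shows "cw_r0 g \<le> ereal \<mu>"
proof -
  have "cw_r0 g \<le> Max (range (\<lambda>i. ereal (g v $ i / v $ i)))"
    unfolding cw_r0_def using assms(1) by (intro INF_lower) simp
  also have "\<dots> \<le> ereal \<mu>"
    using assms by (simp add: pos_vec_def divide_le_eq)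
  finally show ?thesis .
qed

lemma cw_lambda_inf_ge_of_supereigenvector:
  assumes "pos_vec v" and "\<And>i. ereal (\<mu> * v $ i) \<le> g (\<chi> j. ereal (v $ j)) $ i"
  shows "ereal \<mu> \<le> cw_lambda_inf g"
proof -
  have "ereal \<mu> \<le> g (\<chi> j. ereal (v $ j)) $ i / ereal (v $ i)" for i
  proof -
    have "0 < v $ i" using assms(1) by (simp add: pos_vec_def)
    then have "ereal \<mu> = ereal (\<mu> * v $ i) / ereal (v $ i)" by simp
    also have "\<dots> \<le> g (\<chi> j. ereal (v $ j)) $ i / ereal (v $ i)"
      using assms(2) \<open>0 < v $ i\<close> by (intro ereal_divide_right_mono) auto
    finally show ?thesis .
  qed
  then have "ereal \<mu> \<le> Min (range (\<lambda>i. g (\<chi> j. ereal (v $ j)) $ i / ereal (v $ i)))"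
    by simp
  also have "\<dots> \<le> cw_lambda_inf g"
    unfolding cw_lambda_inf_def using assms(1) by (intro SUP_upper) simp
  finally show ?thesis .
qed

text \<open>For \<open>t > 1\<close>, the vector \<open>y + (t - 1) (min v) 1\<close> lies below \<open>t v\<close>, so by homogeneity
  \<open>ext0 f y \<le> t f v\<close>; letting \<open>t \<rightarrow> 1\<close> gives the claim.\<close>
lemma ext0_le_of_le:
  assumes "maps_pos f" "order_preserving_pos f" "homogeneous_pos f"
    and "pos_vec v" and "\<And>j. 0 \<le> y $ j" and "\<And>j. y $ j \<le> v $ j"
  shows "ext0 f y $ i \<le> f v $ i"
proof -
  define S where "S = (\<lambda>e. f (\<chi> j. y $ j + e) $ i) ` {e::real. 0 < e}"
  have shift_pos: "pos_vec (\<chi> j. y $ j + e)" if "0 < e" for e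
    using assms(5) that by (simp add: pos_vec_def add_nonneg_pos)
  have "bdd_below S"
    using assms(1) shift_pos unfolding S_def maps_pos_def pos_vec_def
    by (intro bdd_belowI[of _ 0]) (auto intro: less_imp_le)
  define m where "m = Min (range (\<lambda>j. v $ j))"
  have "0 < m" using assms(4) by (simp add: m_def pos_vec_def)
  have scaled_bound: "Inf S \<le> t * f v $ i" if "1 < t" for t
  proof -
    have "0 < (t - 1) * m" using that \<open>0 < m\<close> by simp
    then have "Inf S \<le> f (\<chi> j. y $ j + (t - 1) * m) $ i"
      using \<open>bdd_below S\<close> unfolding S_def by (intro cInf_lower) auto
    also have "\<dots> \<le> f (t *\<^sub>R v) $ i"
    proof -
      have "y $ j + (t - 1) * m \<le> v $ j + (t - 1) * v $ j" for j
        using that assms(6)[of j] by (intro add_mono) (simp_all add: m_def)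
      then have "\<forall>j. (\<chi> j. y $ j + (t - 1) * m) $ j \<le> (t *\<^sub>R v) $ j"
        by (simp add: algebra_simps)
      moreover have "pos_vec (t *\<^sub>R v)"
        using assms(4) that by (simp add: pos_vec_def)
      ultimately show ?thesis
        using assms(2) shift_pos[OF \<open>0 < (t - 1) * m\<close>]
        unfolding order_preserving_pos_def by blast
    qed
    also have "\<dots> = t * f v $ i"
      using assms(3,4) that unfolding homogeneous_pos_def by simp
    finally show ?thesis .
  qed
  have "Inf S \<le> f v $ i"
  proof (rule field_le_mult_one_interval)
    fix z :: real assume "0 < z" "z < 1"
    then have "z * Inf S \<le> z * ((1 / z) * f v $ i)"
      by (intro mult_left_mono scaled_bound) auto
    with \<open>0 < z\<close> show "z * Inf S \<le> f v $ i" by simp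
  qed
  then show ?thesis by (simp add: ext0_def S_def)
qed

lemma le_extinf_of_le:
  assumes "order_preserving_pos f" and "pos_vec w" and "\<And>j. ereal (w $ j) \<le> x $ j"
  shows "ereal (f w $ i) \<le> extinf f x $ i"
proof -
  define t where "t = Max (range (\<lambda>j. w $ j))"
  define w' where "w' = (\<chi> j. real_of_ereal (min (x $ j) (ereal t)))"
  have w_le_t: "w $ j \<le> t" for j by (simp add: t_def)
  have "0 < t" using assms(2) w_le_t by (meson pos_vec_def less_le_trans)
  have w_le_w': "w $ j \<le> w' $ j" for j
  proof -
    have "ereal (w $ j) \<le> min (x $ j) (ereal t)" using assms(3) w_le_t by simp
    moreover have "min (x $ j) (ereal t) \<noteq> \<infinity>"
      using min.cobounded2[of "x $ j" "ereal t"] by (metis ereal_infty_less_eq(1) PInfty_neq_ereal(1))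
    ultimately show ?thesis unfolding w'_def
      by (cases "min (x $ j) (ereal t)") auto
  qed
  then have "pos_vec w'"
    using assms(2) by (meson pos_vec_def less_le_trans)
  then have "f w $ i \<le> f w' $ i"
    using assms(1,2) w_le_w' unfolding order_preserving_pos_def by blast
  also have "ereal (f w' $ i) \<le> extinf f x $ i"
    unfolding extinf_def w'_def using \<open>0 < t\<close> by simp (intro SUP_upper, simp)
  finally show ?thesis by simp
qed

lemma f0J_le:
  assumes "maps_pos f" "order_preserving_pos f" "homogeneous_pos f" and "pos_vec v"
  shows "f0J f J v $ i \<le> f v $ i"
proof (cases "i \<in> J")
  case True
  have "ext0 f (proj0 J v) $ i \<le> f v $ i"
    using assms by (intro ext0_le_of_le) (auto simp: proj0_def pos_vec_def less_imp_le)
  with True show ?thesis by (simp add: f0J_def proj0_def)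
next
  case False
  then show ?thesis
    using assms(1,4) by (simp add: f0J_def proj0_def maps_pos_def pos_vec_def less_imp_le)
qed

lemma le_finfJ:
  assumes "order_preserving_pos f" and "pos_vec v"
  shows "ereal (f v $ i) \<le> finfJ f K (\<chi> j. ereal (v $ j)) $ i"
proof (cases "i \<in> K")
  case True
  have "ereal (f v $ i) \<le> extinf f (projinf K (\<chi> j. ereal (v $ j))) $ i"
    using assms by (intro le_extinf_of_le) (auto simp: projinf_def)
  with True show ?thesis by (simp add: finfJ_def projinf_def)
qed (simp add: finfJ_def projinf_def)

theorem theorem3p6:
  fixes f :: "real^'n \<Rightarrow> real^'n" and J :: "'n set"
  assumes "maps_pos f" and "order_preserving_pos f" and "homogeneous_pos f"
    and "J \<noteq> {}" and "J \<noteq> UNIV"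
    and "cw_r0 (f0J f J) > cw_lambda_inf (finfJ f (UNIV - J))"
  shows "\<not> (\<exists>v \<mu>. pos_vec v \<and> f v = \<mu> *\<^sub>R v)"
proof
  assume "\<exists>v \<mu>. pos_vec v \<and> f v = \<mu> *\<^sub>R v"
  then obtain v \<mu> where v: "pos_vec v" and eigen: "f v = \<mu> *\<^sub>R v" by blast
  have "cw_r0 (f0J f J) \<le> ereal \<mu>"
    using f0J_le[OF assms(1-3) v] eigen
    by (intro cw_r0_le_of_subeigenvector[OF v]) simp
  also have "\<dots> \<le> cw_lambda_inf (finfJ f (UNIV - J))"
    using le_finfJ[OF assms(2) v] eigen
    by (intro cw_lambda_inf_ge_of_supereigenvector[OF v]) simp
  finally show False using assms(6) by simp
qed

end
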